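(* Suppose the lattice $\mathcal{Z}$ is integral, nicely invertible with respect to an inversion $\iota$, norm-Euclidean, unit-generated, and 3-remote. Then the associated continued fraction algorithm has the finite range property: there are finitely many positive-measure sets $U_1,\dots,U_J\subset K$ such that every nonempty cylinder $C_s$ satisfies $T^{|s|}C_s=U_j$ up to a Lebesgue-null set for some $j$.
   Context: $X=\mathbb{R}^d$ (including $\mathbb{C},\mathbb{H},\mathbb{O}$ as $\mathbb{R}^2,\mathbb{R}^4,\mathbb{R}^8$) with Euclidean norm, distance and dot product. $\iota:X\setminus\{0\}\to X\setminus\{0\}$ satisfies $|\iota x|=1/|x|$, $d(\iota x,\iota y)=d(x,y)/(|x||y|)$ (equivalently $\iota(x)=\mathcal{O}(x)/|x|^2$, $\mathcal{O}$ orthogonal) and $\iota\circ\iota=\mathrm{id}$; $\iota(0)=0$. $\mathcal{Z}$ is a discrete additive subgroup with compact quotient, $K=\{x:d(x,0)\le d(x,z)\ \forall z\in\mathcal{Z}\}$ its Dirichlet region with a boundary choice so each $x$ has a unique $[x]\in\mathcal{Z}$ with $x-[x]\in K$. $Tx=\iota x-[\iota x]$ ($x\ne0$), $T0=0$. Cylinders: $C_\emptyset=K$, $C_{as}=K\cap\iota(C_s+a)$ for $a\in\mathcal{Z}$. Integral: $z\cdot z\in\mathbb{Z}$ $\forall z\in\mathcal{Z}$. Nicely invertible: $|z|^2\iota(z)\in\mathcal{Z}$ for nonzero $z\in\mathcal{Z}$. Norm-Euclidean: $\sup_{x\in K}|x|<1$. Unit-generated: every element is a sum of lattice points of norm $1$.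 3-remote: $\inf_{x\in K}d(z,x)\ge1$ for all $z\in\mathcal{Z}$ with $|z|=\sqrt3$. *)

theory Defs
  imports "HOL-Analysis.Analysis"
begin

definition is_lattice :: "'a::euclidean_space set \<Rightarrow> bool" where
  "is_lattice Z \<longleftrightarrow>
     0 \<in> Z \<and> (\<forall>x\<in>Z. \<forall>y\<in>Z. x + y \<in> Z \<and> - x \<in> Z) \<and>
     (\<exists>e>0. \<forall>z\<in>Z. z \<noteq> 0 \<longrightarrow> e \<le> norm z) \<and>
     (\<exists>C. compact C \<and> (\<forall>x. \<exists>z\<in>Z. x - z \<in> C))"

definition is_inversion :: "('a::euclidean_space \<Rightarrow> 'a) \<Rightarrow> bool" where
  "is_inversion \<iota> \<longleftrightarrow>
     \<iota> 0 = 0 \<and>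
     (\<forall>x. x \<noteq> 0 \<longrightarrow> \<iota> x \<noteq> 0 \<and> norm (\<iota> x) = 1 / norm x \<and> \<iota> (\<iota> x) = x) \<and>
     (\<forall>x y. x \<noteq> 0 \<longrightarrow> y \<noteq> 0 \<longrightarrow>
        dist (\<iota> x) (\<iota> y) = dist x y / (norm x * norm y))"

definition dirichlet :: "'a::euclidean_space set \<Rightarrow> 'a set" where
  "dirichlet Z = {x. \<forall>z\<in>Z. dist x 0 \<le> dist x z}"

definition is_boundary_choice :: "'a::euclidean_space set \<Rightarrow> 'a set \<Rightarrow> bool" where
  "is_boundary_choice Z K \<longleftrightarrow> K \<subseteq> dirichlet Z \<and> (\<forall>x. \<exists>!z. z \<in> Z \<and> x - z \<in> K)"

definition lat_floor :: "'a::euclidean_space set \<Rightarrow> 'a set \<Rightarrow> 'a \<Rightarrow> 'a" where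
  "lat_floor Z K x = (THE z. z \<in> Z \<and> x - z \<in> K)"

definition cf_map :: "('a::euclidean_space \<Rightarrow> 'a) \<Rightarrow> 'a set \<Rightarrow> 'a set \<Rightarrow> 'a \<Rightarrow> 'a" where
  "cf_map \<iota> Z K x = (if x = 0 then 0 else \<iota> x - lat_floor Z K (\<iota> x))"

fun cylinder :: "('a::euclidean_space \<Rightarrow> 'a) \<Rightarrow> 'a set \<Rightarrow> 'a list \<Rightarrow> 'a set" where
  "cylinder \<iota> K [] = K"
| "cylinder \<iota> K (a # s) = K \<inter> \<iota> ` ((\<lambda>y. y + a) ` cylinder \<iota> K s)"

definition integral_lattice :: "'a::euclidean_space set \<Rightarrow> bool" where
  "integral_lattice Z \<longleftrightarrow> (\<forall>z\<in>Z. z \<bullet> z \<in> \<int>)"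

definition nicely_invertible :: "('a::euclidean_space \<Rightarrow> 'a) \<Rightarrow> 'a set \<Rightarrow> bool" where
  "nicely_invertible \<iota> Z \<longleftrightarrow> (\<forall>z\<in>Z. z \<noteq> 0 \<longrightarrow> (norm z)\<^sup>2 *\<^sub>R \<iota> z \<in> Z)"

definition norm_euclidean :: "'a::euclidean_space set \<Rightarrow> bool" where
  "norm_euclidean K \<longleftrightarrow> (SUP x\<in>K. norm x) < 1"

definition unit_generated :: "'a::euclidean_space set \<Rightarrow> bool" where
  "unit_generated Z \<longleftrightarrow>
     (\<forall>z\<in>Z. \<exists>us. set us \<subseteq> {u\<in>Z. norm u = 1} \<and> z = sum_list us)"

definition three_remote :: "'a::euclidean_space set \<Rightarrow> 'a set \<Rightarrow> bool" where
  "three_remote Z K \<longleftrightarrow> (\<forall>z\<in>Z. norm z = sqrt 3 \<longrightarrow> (INF x\<in>K. dist z x) \<ge> 1)"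

definition ae_eq :: "'a::euclidean_space set \<Rightarrow> 'a set \<Rightarrow> bool" where
  "ae_eq A B \<longleftrightarrow> (A - B) \<union> (B - A) \<in> null_sets lebesgue"

end

theory Submission
  imports Defs "HOL-Library.Multiset"
begin

text \<open>Up to null sets, the image of a cylinder \<open>C\<^sub>s\<close> under \<open>T\<^sup>n\<close>, \<open>n = length s\<close>,
  is the part of \<open>K\<close> outside the open unit balls around a set \<open>S\<close> of lattice points of norm
  \<open>1\<close> or \<open>\<surd>2\<close> and inside the half-spaces \<open>x \<bullet> v \<le> 0\<close> for a set \<open>V\<close> of unit vectors, and
  there are only finitely many such \<open>S\<close> and \<open>V\<close>. The shape survives one more step of the map,
  i.e. pulling back along \<open>y \<mapsto> \<iota> (y + b)\<close>: nice invertibility sends spheres around points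
  of norm \<open>\<surd>2\<close> to spheres around lattice points, integrality turns spheres around unit
  vectors into half-spaces that on the Dirichlet region are either everything, a half-space
  through the origin, or a null set, and 3-remoteness discards all other lattice points.\<close>

lemma Ints_less_imp_add_one_le:
  fixes x y :: real
  assumes "x \<in> \<int>" "y \<in> \<int>" "x < y"
  shows "x + 1 \<le> y"
proof -
  obtain m n :: int where "x = of_int m" "y = of_int n"
    using assms(1,2) Ints_cases by metis
  with assms(3) show ?thesis by simp
qed

lemma ae_eq_iff_negligible: "ae_eq A B \<longleftrightarrow> negligible (sym_diff A B)"
  by (simp add: ae_eq_def negligible_iff_null_sets)

lemma ae_eq_refl: "ae_eq A A"
  by (simp add: ae_eq_def)

lemma ae_eq_trans: "ae_eq A B \<Longrightarrow> ae_eq B C \<Longrightarrow> ae_eq A C"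
  unfolding ae_eq_iff_negligible
  by (rule negligible_subset[OF negligible_Un]) blast+

lemma ae_eq_negligible: "ae_eq A B \<Longrightarrow> negligible B \<Longrightarrow> negligible A"
  unfolding ae_eq_iff_negligible
  by (rule negligible_subset[OF negligible_Un]) blast+

subsection \<open>Inversions\<close>

locale inversion =
  fixes \<iota> :: "'a::euclidean_space \<Rightarrow> 'a"
  assumes is_inversion: "is_inversion \<iota>"
begin

lemma inversion_eq_0_iff [simp]: "\<iota> x = 0 \<longleftrightarrow> x = 0"
  and inversion_inversion [simp]: "\<iota> (\<iota> x) = x"
  and norm_inversion: "norm (\<iota> x) = 1 / norm x"
  using is_inversion unfolding is_inversion_def by (metis divide_eq_0_iff norm_zero)+

lemma dist_inversion:
  "x \<noteq> 0 \<Longrightarrow> y \<noteq> 0 \<Longrightarrow> dist (\<iota> x) (\<iota> y) = dist x y / (norm x * norm y)"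
  using is_inversion unfolding is_inversion_def by blast

lemma inner_inversion:
  assumes "x \<noteq> 0" "y \<noteq> 0"
  shows "\<iota> x \<bullet> \<iota> y = (x \<bullet> y) / ((norm x)\<^sup>2 * (norm y)\<^sup>2)"
proof -
  have sq_dist: "(dist u v)\<^sup>2 = (norm u)\<^sup>2 + (norm v)\<^sup>2 - 2 * (u \<bullet> v)" for u v :: 'a
    by (simp add: dist_norm power2_norm_eq_inner inner_diff_left inner_diff_right inner_commute)
  have "(dist (\<iota> x) (\<iota> y))\<^sup>2 = (dist x y)\<^sup>2 / ((norm x)\<^sup>2 * (norm y)\<^sup>2)"
    using dist_inversion[OF assms] by (simp add: power_divide power_mult_distrib)
  then have "1 / (norm x)\<^sup>2 + 1 / (norm y)\<^sup>2 - 2 * (\<iota> x \<bullet> \<iota> y) =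
      ((norm x)\<^sup>2 + (norm y)\<^sup>2 - 2 * (x \<bullet> y)) / ((norm x)\<^sup>2 * (norm y)\<^sup>2)"
    unfolding sq_dist by (simp add: norm_inversion power_divide)
  with assms show ?thesis by (simp add: field_simps)
qed

lemma dist_inversion_left:
  assumes "y \<noteq> 0" "c \<noteq> 0"
  shows "dist (\<iota> y) c = dist y (\<iota> c) * norm c / norm y"
  using dist_inversion[of y "\<iota> c"] assms by (simp add: norm_inversion)

lemma one_le_dist_inversion_iff:
  assumes "y \<noteq> 0" "c \<noteq> 0"
  shows "1 \<le> dist (\<iota> y) c \<longleftrightarrow> y \<bullet> y \<le> (c \<bullet> c) * (y \<bullet> y - 2 * (y \<bullet> \<iota> c)) + 1"
proof -
  have "1 \<le> dist (\<iota> y) c \<longleftrightarrow> norm y \<le> norm c * dist y (\<iota> c)"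
    using assms by (simp add: dist_inversion_left pos_le_divide_eq mult.commute)
  also have "\<dots> \<longleftrightarrow> (norm y)\<^sup>2 \<le> (norm c * dist y (\<iota> c))\<^sup>2"
    using abs_le_square_iff[of "norm y" "norm c * dist y (\<iota> c)"] by simp
  also have "(norm c * dist y (\<iota> c))\<^sup>2 = (norm c)\<^sup>2 * ((norm y)\<^sup>2 - 2 * (y \<bullet> \<iota> c) + (norm (\<iota> c))\<^sup>2)"
    by (simp add: power_mult_distrib dist_norm power2_norm_eq_inner inner_diff_left
        inner_diff_right inner_commute)
  also have "(norm (\<iota> c))\<^sup>2 = 1 / (norm c)\<^sup>2"
    by (simp add: norm_inversion power_divide)
  finally show ?thesis
    using assms by (simp add: power2_norm_eq_inner algebra_simps)
qed

lemma one_le_dist_inversion_iff_norm_1: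
  assumes "y \<noteq> 0" "norm c = 1"
  shows "1 \<le> dist (\<iota> y) c \<longleftrightarrow> 2 * (y \<bullet> \<iota> c) \<le> 1"
proof -
  have "c \<noteq> 0" "c \<bullet> c = 1"
    using assms(2) by (auto simp: norm_eq_1)
  then show ?thesis
    using one_le_dist_inversion_iff[of y c] assms(1) by auto
qed

lemma one_le_dist_inversion_iff_norm_sqrt2:
  assumes "y \<noteq> 0" "(norm c)\<^sup>2 = 2"
  shows "1 \<le> dist (\<iota> y) c \<longleftrightarrow> 1 \<le> dist y (2 *\<^sub>R \<iota> c)"
proof -
  have cc: "c \<bullet> c = 2" and "c \<noteq> 0"
    using assms(2) by (auto simp: power2_norm_eq_inner)
  have "\<iota> c \<bullet> \<iota> c = 1/2"
    using assms(2) by (simp add: norm_inversion power2_norm_eq_inner[symmetric] power_divide)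
  then have "(dist y (2 *\<^sub>R \<iota> c))\<^sup>2 = y \<bullet> y - 4 * (y \<bullet> \<iota> c) + 2"
    by (simp add: dist_norm power2_norm_eq_inner inner_diff_left inner_diff_right inner_commute)
  moreover have "1 \<le> dist y (2 *\<^sub>R \<iota> c) \<longleftrightarrow> 1 \<le> (dist y (2 *\<^sub>R \<iota> c))\<^sup>2"
    using abs_le_square_iff[of 1 "dist y (2 *\<^sub>R \<iota> c)"] by simp
  ultimately show ?thesis
    using one_le_dist_inversion_iff[of y c] assms(1) \<open>c \<noteq> 0\<close> cc by (auto simp: algebra_simps)
qed

lemma inversion_inner_nonpos_iff:
  assumes "y \<noteq> 0" "v \<noteq> 0"
  shows "\<iota> y \<bullet> v \<le> 0 \<longleftrightarrow> y \<bullet> \<iota> v \<le> 0"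
proof -
  have "\<iota> y \<bullet> v = (y \<bullet> \<iota> v) / ((norm y)\<^sup>2 * (norm (\<iota> v))\<^sup>2)"
    using inner_inversion[of y "\<iota> v"] assms by simp
  moreover have "(norm y)\<^sup>2 * (norm (\<iota> v))\<^sup>2 > 0"
    using assms by simp
  ultimately show ?thesis
    by (simp add: divide_le_0_iff)
qed

text \<open>Away from the pole \<open>\<iota>\<close> is locally Lipschitz, so it preserves null sets.\<close>
lemma negligible_inversion_image:
  assumes "negligible N"
  shows "negligible (\<iota> ` N)"
proof -
  have "negligible (\<iota> ` (N - {0}))"
  proof (rule negligible_locally_Lipschitz_image)
    show "negligible (N - {0})"
      using assms by (rule negligible_subset) blast
  next
    fix x assume "x \<in> N - {0}"
    then have x: "norm x > 0" by simp
    have "norm (\<iota> y - \<iota> x) \<le> (2 / (norm x)\<^sup>2) * norm (y - x)"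
      if y: "y \<in> (N - {0}) \<inter> ball x (norm x / 2)" for y
    proof -
      have "norm x \<le> norm y + norm (y - x)"
        using norm_triangle_sub[of x y] by (simp add: norm_minus_commute)
      then have ny: "norm x / 2 \<le> norm y"
        using y by (simp add: dist_norm norm_minus_commute)
      have "norm (\<iota> y - \<iota> x) = norm (y - x) / (norm y * norm x)"
        using dist_inversion[of y x] y x by (simp add: dist_norm)
      also have "\<dots> \<le> norm (y - x) / (norm x / 2 * norm x)"
        using ny x by (intro divide_left_mono mult_right_mono mult_pos_pos) auto
      finally show ?thesis
        by (simp add: power2_eq_square mult.commute)
    qed
    then show "\<exists>T B. open T \<and> x \<in> T \<and> (\<forall>y \<in> (N - {0}) \<inter> T. norm (\<iota> y - \<iota> x) \<le> B * norm (y - x))"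
      using x by (intro exI[of _ "ball x (norm x / 2)"] exI[of _ "2 / (norm x)\<^sup>2"]) auto
  qed simp
  moreover have "\<iota> ` N \<subseteq> insert 0 (\<iota> ` (N - {0}))"
    by auto
  ultimately show ?thesis
    by (meson negligible_insert negligible_subset)
qed

lemma negligible_inversion_preimage:
  assumes "negligible N"
  shows "negligible {y. \<iota> (y + b) \<in> N}"
proof -
  have eq: "{y. \<iota> (y + b) \<in> N} = (+) (- b) ` \<iota> ` N"
    by (force simp: image_iff algebra_simps)
  show ?thesis
    unfolding eq by (intro negligible_translation negligible_inversion_image assms)
qed

lemma ae_eq_inversion_preimage:
  assumes "ae_eq A B"
  shows "ae_eq {y \<in> K. \<iota> (y + b) \<in> A} {y \<in> K. \<iota> (y + b) \<in> B}"
  using assms unfolding ae_eq_iff_negligible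
  by (rule negligible_subset[OF negligible_inversion_preimage[of _ b]]) blast

end

fun inverse_branch :: "('a::euclidean_space \<Rightarrow> 'a) \<Rightarrow> 'a list \<Rightarrow> 'a \<Rightarrow> 'a" where
  "inverse_branch \<iota> [] p = p"
| "inverse_branch \<iota> (a # s) p = \<iota> (inverse_branch \<iota> s p + a)"

lemma (in inversion) negligible_inverse_branch_image:
  "negligible N \<Longrightarrow> negligible (inverse_branch \<iota> s ` N)"
proof (induction s)
  case (Cons a s)
  have "inverse_branch \<iota> (a # s) ` N = \<iota> ` (+) a ` inverse_branch \<iota> s ` N"
    by (auto simp: image_iff add.commute)
  then show ?case
    using Cons by (simp add: negligible_inversion_image negligible_translation)
qed simp

subsection \<open>Lattices and their Dirichlet regions\<close>

lemma mem_dirichlet_iff: "w \<in> dirichlet Z \<longleftrightarrow> (\<forall>z\<in>Z. 2 * (w \<bullet> z) \<le> (norm z)\<^sup>2)"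
proof -
  have "dist w 0 \<le> dist w z \<longleftrightarrow> 2 * (w \<bullet> z) \<le> (norm z)\<^sup>2" for z
    by (simp add: dist_norm norm_le power2_norm_eq_inner inner_diff_left inner_diff_right
        inner_commute)
  then show ?thesis
    unfolding dirichlet_def by auto
qed

lemma closed_dirichlet: "closed (dirichlet Z)"
proof -
  have eq: "dirichlet Z = (\<Inter>z\<in>Z. {x. (2 *\<^sub>R z) \<bullet> x \<le> (norm z)\<^sup>2})"
    by (auto simp: mem_dirichlet_iff inner_commute)
  show ?thesis
    unfolding eq by (intro closed_INT ballI closed_halfspace_le)
qed

lemma lattice_point_in_dirichlet: "z \<in> Z \<Longrightarrow> z \<in> dirichlet Z \<Longrightarrow> z = 0"
  unfolding dirichlet_def by fastforce

definition unit_vectors :: "'a::euclidean_space set \<Rightarrow> 'a set" where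
  "unit_vectors Z = {u \<in> Z. norm u = 1}"

definition sqrt2_vectors :: "'a::euclidean_space set \<Rightarrow> 'a set" where
  "sqrt2_vectors Z = {c \<in> Z. (norm c)\<^sup>2 = 2}"

lemma dirichlet_inner_unit_vector_le:
  "x \<in> dirichlet Z \<Longrightarrow> u \<in> unit_vectors Z \<Longrightarrow> 2 * (x \<bullet> u) \<le> 1"
  by (auto simp: mem_dirichlet_iff unit_vectors_def)

definition cut_region :: "'a::euclidean_space set \<Rightarrow> 'a set \<Rightarrow> 'a set" where
  "cut_region S V = {x. (\<forall>c\<in>S. 1 \<le> dist x c) \<and> (\<forall>v\<in>V. x \<bullet> v \<le> 0)}"

lemma cut_region_Int: "cut_region S V \<inter> cut_region S' V' = cut_region (S \<union> S') (V \<union> V')"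
  unfolding cut_region_def by blast

lemma closed_cut_region: "closed (cut_region S V)"
proof -
  have "cut_region S V = (\<Inter>c\<in>S. - ball c 1) \<inter> (\<Inter>v\<in>V. {x. v \<bullet> x \<le> 0})"
    unfolding cut_region_def by (auto simp: dist_commute inner_commute not_less)
  then show ?thesis
    by (simp add: closed_INT closed_Int closed_halfspace_le open_ball closed_Compl)
qed

text \<open>A pair \<open>(w, k)\<close> encodes the half-space \<open>2 (y \<bullet> w) \<le> 1 - k\<close>. For a unit vector \<open>w\<close> of
  the lattice and integral \<open>k\<close>, its trace on the Dirichlet region is everything when \<open>k \<le> 0\<close>,
  a half-space through the origin when \<open>k = 1\<close>, and a null set when \<open>k \<ge> 2\<close>.\<close>
definition halfspaces :: "('a::euclidean_space \<times> real) set \<Rightarrow> 'a set" where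
  "halfspaces H = {y. \<forall>(w, k)\<in>H. 2 * (y \<bullet> w) \<le> 1 - k}"

locale lattice =
  fixes Z :: "'a::euclidean_space set"
  assumes is_lattice: "is_lattice Z"
begin

lemma add_in: "x \<in> Z \<Longrightarrow> y \<in> Z \<Longrightarrow> x + y \<in> Z"
  and uminus_in: "x \<in> Z \<Longrightarrow> - x \<in> Z"
  using is_lattice unfolding is_lattice_def by auto

lemma diff_in: "x \<in> Z \<Longrightarrow> y \<in> Z \<Longrightarrow> x - y \<in> Z"
  using add_in[of x "- y"] uminus_in[of y] by simp

lemma finite_Int_cball: "finite (Z \<inter> cball 0 r)"
proof -
  obtain e where e: "e > 0" "\<forall>z\<in>Z. z \<noteq> 0 \<longrightarrow> e \<le> norm z"
    using is_lattice unfolding is_lattice_def by blast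
  have "uniform_discrete (Z \<inter> cball 0 r)"
    unfolding uniform_discrete_def
  proof (intro exI[of _ e] conjI ballI impI)
    fix x y assume xy: "x \<in> Z \<inter> cball 0 r" "y \<in> Z \<inter> cball 0 r" "dist x y < e"
    show "x = y"
      using e(2) xy diff_in[of x y] by (force simp: dist_norm)
  qed (use e in auto)
  then show ?thesis
    using uniform_discrete_finite_iff by blast
qed

lemma bounded_dirichlet: "bounded (dirichlet Z)"
proof -
  obtain C where C: "compact C" "\<forall>x. \<exists>z\<in>Z. x - z \<in> C"
    using is_lattice unfolding is_lattice_def by blast
  obtain B where B: "\<forall>c\<in>C. norm c \<le> B"
    using compact_imp_bounded[OF C(1)] unfolding bounded_iff by blast
  have "norm x \<le> B" if "x \<in> dirichlet Z" for x
  proof -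
    obtain z where z: "z \<in> Z" "x - z \<in> C"
      using C(2) by blast
    then have "dist x 0 \<le> dist x z"
      using that unfolding dirichlet_def by auto
    with B z show ?thesis
      by (force simp: dist_norm)
  qed
  then show ?thesis
    unfolding bounded_iff by blast
qed

lemma finite_unit_vectors: "finite (unit_vectors Z)"
  by (rule finite_subset[OF _ finite_Int_cball[of 1]]) (auto simp: unit_vectors_def)

lemma finite_sqrt2_vectors: "finite (sqrt2_vectors Z)"
proof (rule finite_subset[OF _ finite_Int_cball[of 2]])
  have "norm c \<le> 2" if "(norm c)\<^sup>2 = 2" for c :: 'a
    using that abs_le_square_iff[of "norm c" 2] by simp
  then show "sqrt2_vectors Z \<subseteq> Z \<inter> cball 0 2"
    by (auto simp: sqrt2_vectors_def)
qed

lemma dirichlet_translate_bisector: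
  assumes "x \<in> dirichlet Z" "x - z \<in> dirichlet Z" "z \<in> Z"
  shows "z \<bullet> x = (norm z)\<^sup>2 / 2"
proof -
  have "2 * (x \<bullet> z) \<le> (norm z)\<^sup>2" "2 * ((x - z) \<bullet> (- z)) \<le> (norm (- z))\<^sup>2"
    using assms uminus_in[OF assms(3)] by (auto simp: mem_dirichlet_iff)
  moreover have "(x - z) \<bullet> (- z) = (norm z)\<^sup>2 - x \<bullet> z"
    by (simp add: inner_diff_left power2_norm_eq_inner)
  ultimately show ?thesis
    by (simp add: inner_commute)
qed

lemma uminus_unit_vector: "u \<in> unit_vectors Z \<Longrightarrow> - u \<in> unit_vectors Z"
  by (simp add: unit_vectors_def uminus_in)

lemma dirichlet_Int_halfspaces_eq:
  assumes "\<forall>(w, k)\<in>H. w \<in> unit_vectors Z \<and> k \<in> \<int> \<and> k \<le> 1"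
  shows "dirichlet Z \<inter> halfspaces H = dirichlet Z \<inter> cut_region {} {w. (w, 1) \<in> H}"
proof -
  have "2 * (y \<bullet> w) \<le> 1 - k \<longleftrightarrow> (k = 1 \<longrightarrow> y \<bullet> w \<le> 0)"
    if "y \<in> dirichlet Z" "(w, k) \<in> H" for y w k
  proof (cases "k = 1")
    case False
    then have "k + 1 \<le> 1"
      using assms that(2) Ints_less_imp_add_one_le[of k 1] by fastforce
    with False show ?thesis
      using dirichlet_inner_unit_vector_le[OF that(1)] assms that(2) by fastforce
  qed simp
  then show ?thesis
    unfolding halfspaces_def cut_region_def by fastforce
qed

lemma negligible_dirichlet_Int_halfspaces:
  assumes "(w, k) \<in> H" "w \<in> unit_vectors Z" "2 \<le> k"
  shows "negligible (dirichlet Z \<inter> halfspaces H)"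
proof (rule negligible_subset[OF negligible_hyperplane])
  show "dirichlet Z \<inter> halfspaces H \<subseteq> {y. w \<bullet> y = - 1/2}"
  proof
    fix y assume y: "y \<in> dirichlet Z \<inter> halfspaces H"
    then have "2 * (y \<bullet> w) \<le> 1 - k"
      using assms(1) unfolding halfspaces_def by blast
    moreover have "2 * (y \<bullet> - w) \<le> 1"
      using y dirichlet_inner_unit_vector_le uminus_unit_vector[OF assms(2)] by blast
    ultimately show "y \<in> {y. w \<bullet> y = - 1/2}"
      using assms(3) by (simp add: inner_commute)
  qed
  show "w \<noteq> 0 \<or> - 1/2 \<noteq> (0::real)"
    by simp
qed

end

locale boundary_choice = lattice +
  fixes K :: "'a::euclidean_space set"
  assumes is_boundary_choice: "is_boundary_choice Z K"
begin

lemma K_subset_dirichlet: "K \<subseteq> dirichlet Z"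
  and ex1_reduction: "\<exists>!z. z \<in> Z \<and> x - z \<in> K"
  using is_boundary_choice unfolding is_boundary_choice_def by auto

lemma lat_floor_add: "y \<in> K \<Longrightarrow> a \<in> Z \<Longrightarrow> lat_floor Z K (y + a) = a"
  unfolding lat_floor_def by (rule the1_equality[OF ex1_reduction]) auto

lemma zero_in_K: "0 \<in> K"
proof -
  obtain z where z: "z \<in> Z" "- z \<in> K"
    using ex1_reduction[of 0] by auto
  then have "- z = 0"
    using lattice_point_in_dirichlet[OF uminus_in] K_subset_dirichlet by blast
  with z show ?thesis
    by simp
qed

lemma add_lattice_point_nonzero:
  assumes "y \<in> K" "a \<in> Z" "a \<noteq> 0"
  shows "y + a \<noteq> 0"
proof
  assume "y + a = 0"
  then have "y = - a"
    by (simp add: eq_neg_iff_add_eq_0)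
  then have "y = 0"
    using assms lattice_point_in_dirichlet[OF uminus_in] K_subset_dirichlet by blast
  with \<open>y + a = 0\<close> assms(3) show False
    by simp
qed

text \<open>A point of the Dirichlet region that is not in the fundamental domain \<open>K\<close> lies on one
  of the finitely many bisecting hyperplanes between \<open>0\<close> and a nearby lattice point.\<close>
lemma negligible_dirichlet_diff: "negligible (dirichlet Z - K)"
proof -
  obtain B where B: "\<forall>x\<in>dirichlet Z. norm x \<le> B"
    using bounded_dirichlet unfolding bounded_iff by blast
  let ?F = "Z \<inter> cball 0 (2 * B) - {0}"
  have "dirichlet Z - K \<subseteq> (\<Union>z\<in>?F. {x. z \<bullet> x = (norm z)\<^sup>2 / 2})"
  proof
    fix x assume x: "x \<in> dirichlet Z - K"
    obtain z where z: "z \<in> Z" "x - z \<in> K"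
      using ex1_reduction by blast
    have xzD: "x - z \<in> dirichlet Z"
      using z K_subset_dirichlet by blast
    have "z \<noteq> 0"
      using x z by auto
    have "z \<bullet> x = (norm z)\<^sup>2 / 2"
      using dirichlet_translate_bisector x xzD z(1) by blast
    moreover have "norm x \<le> B" "norm (x - z) \<le> B"
      using B x xzD by auto
    then have "norm z \<le> 2 * B"
      using norm_triangle_sub[of z x] norm_minus_commute[of z x] by linarith
    ultimately show "x \<in> (\<Union>z\<in>?F. {x. z \<bullet> x = (norm z)\<^sup>2 / 2})"
      using z(1) \<open>z \<noteq> 0\<close> by auto
  qed
  moreover have "negligible (\<Union>z\<in>?F. {x. z \<bullet> x = (norm z)\<^sup>2 / 2})"
  proof (rule negligible_Union)
    show "finite ((\<lambda>z. {x. z \<bullet> x = (norm z)\<^sup>2 / 2}) ` ?F)"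
      using finite_Int_cball[of "2 * B"] by blast
  next
    fix T assume "T \<in> (\<lambda>z. {x. z \<bullet> x = (norm z)\<^sup>2 / 2}) ` ?F"
    then show "negligible T"
      using negligible_hyperplane by blast
  qed
  ultimately show ?thesis
    using negligible_subset by blast
qed

lemma K_lebesgue: "K \<in> sets lebesgue"
proof -
  have "sym_diff (dirichlet Z) K = dirichlet Z - K"
    using K_subset_dirichlet by blast
  then have "negligible (sym_diff (dirichlet Z) K)"
    using negligible_dirichlet_diff by simp
  moreover have "dirichlet Z \<in> sets lebesgue"
    using closed_dirichlet[of Z] by (simp add: borel_closed)
  ultimately show ?thesis
    using sets_negligible_symdiff by blast
qed

lemma K_Int_cut_region_lebesgue: "K \<inter> cut_region S V \<in> sets lebesgue"
proof (rule sets.Int[OF K_lebesgue])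
  show "cut_region S V \<in> sets lebesgue"
    using closed_cut_region[of S V] by (simp add: borel_closed)
qed

lemma ae_eq_K_Int_dirichlet_Int: "ae_eq (K \<inter> A) (dirichlet Z \<inter> A)"
  unfolding ae_eq_iff_negligible
  by (rule negligible_subset[OF negligible_dirichlet_diff]) (use K_subset_dirichlet in blast)

end

locale integral_unit_lattice = lattice +
  assumes integral: "integral_lattice Z"
    and unit_generated: "unit_generated Z"
begin

lemma norm_power2_Ints: "z \<in> Z \<Longrightarrow> (norm z)\<^sup>2 \<in> \<int>"
  using integral unfolding integral_lattice_def by (simp add: power2_norm_eq_inner)

lemma two_inner_Ints:
  assumes "a \<in> Z" "b \<in> Z"
  shows "2 * (a \<bullet> b) \<in> \<int>"
proof -
  have "2 * (a \<bullet> b) = (norm (a + b))\<^sup>2 - (norm a)\<^sup>2 - (norm b)\<^sup>2"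
    by (simp add: power2_norm_eq_inner inner_add_left inner_add_right inner_commute)
  then show ?thesis
    using assms add_in norm_power2_Ints by simp
qed

text \<open>By integrality, two unit vectors at an obtuse angle are at angle \<open>2\<pi>/3\<close> or opposite.\<close>
lemma add_unit_vectors_cases:
  assumes u: "u \<in> unit_vectors Z" and v: "v \<in> unit_vectors Z" and "u \<bullet> v < 0"
  shows "u + v = 0 \<or> u + v \<in> unit_vectors Z"
proof -
  have "2 * (u \<bullet> v) + 1 \<le> 0"
    using Ints_less_imp_add_one_le[of "2 * (u \<bullet> v)" 0] two_inner_Ints assms
    by (auto simp: unit_vectors_def)
  moreover have n: "(norm (u + v))\<^sup>2 = 2 + 2 * (u \<bullet> v)"
    using u v by (simp add: unit_vectors_def power2_norm_eq_inner inner_add_left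
        inner_add_right inner_commute norm_eq_1)
  ultimately have le1: "(norm (u + v))\<^sup>2 \<le> 1"
    by simp
  have uvZ: "u + v \<in> Z"
    using u v add_in by (simp add: unit_vectors_def)
  show ?thesis
  proof (cases "(norm (u + v))\<^sup>2 < 1")
    case True
    then have "(norm (u + v))\<^sup>2 + 1 \<le> 1"
      using Ints_less_imp_add_one_le[OF norm_power2_Ints[OF uvZ] Ints_1] by blast
    then show ?thesis
      by simp
  next
    case False
    with le1 have "(u + v) \<bullet> (u + v) = 1"
      by (simp add: power2_norm_eq_inner)
    then have "norm (u + v) = 1"
      by (simp add: norm_eq_1)
    with uvZ show ?thesis
      by (simp add: unit_vectors_def)
  qed
qed

lemma shorter_unit_vector_sum:
  assumes M: "set_mset M \<subseteq> unit_vectors Z" and u: "u \<in># M"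
    and v: "v \<in># M - {#u#}" and obtuse: "u \<bullet> v < 0"
  obtains M' where "set_mset M' \<subseteq> unit_vectors Z" "sum_mset M' = sum_mset M" "size M' < size M"
proof -
  define R where "R = M - {#u#} - {#v#}"
  have M_eq: "M = add_mset u (add_mset v R)"
    using u v unfolding R_def by (metis insert_DiffM)
  have uv: "u \<in> unit_vectors Z" "v \<in> unit_vectors Z" and R: "set_mset R \<subseteq> unit_vectors Z"
    using M M_eq by auto
  have sum: "sum_mset M = (u + v) + sum_mset R"
    using M_eq by (simp add: add.assoc)
  from add_unit_vectors_cases[OF uv obtuse] show ?thesis
  proof
    assume "u + v = 0"
    with R sum M_eq show ?thesis
      by (intro that[of R]) simp_all
  next
    assume "u + v \<in> unit_vectors Z"
    with R sum M_eq show ?thesis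
      by (intro that[of "add_mset (u + v) R"]) simp_all
  qed
qed

text \<open>In a shortest expression of a vector as a sum of unit vectors, no two summands form an
  obtuse angle, so the vector has inner product at least \<open>1\<close> with each of them.\<close>
lemma sum_mset_unit_vectors_inner_ge_1:
  assumes "set_mset M \<subseteq> unit_vectors Z" "sum_mset M \<noteq> 0"
  shows "\<exists>u\<in>unit_vectors Z. 1 \<le> sum_mset M \<bullet> u"
  using assms
proof (induction "size M" arbitrary: M rule: less_induct)
  case less
  obtain u where u: "u \<in># M"
    using less.prems(2) by (metis multiset_nonemptyE sum_mset.empty)
  have uU: "u \<in> unit_vectors Z"
    using u less.prems(1) by blast
  show ?case
  proof (cases "\<exists>v\<in>#M - {#u#}. u \<bullet> v < 0")
    case True
    then obtain M' where "set_mset M' \<subseteq> unit_vectors Z" "sum_mset M' = sum_mset M" "size M' < size M"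
      using shorter_unit_vector_sum[OF less.prems(1) u] by blast
    with less.hyps less.prems(2) show ?thesis
      by metis
  next
    case False
    have "0 \<le> u \<bullet> sum_mset N" if "\<forall>v\<in>#N. 0 \<le> u \<bullet> v" for N
      using that by (induction N) (auto simp: inner_add_right)
    then have "0 \<le> u \<bullet> sum_mset (M - {#u#})"
      using False by force
    moreover have "sum_mset M \<bullet> u = u \<bullet> u + u \<bullet> sum_mset (M - {#u#})"
      using u by (metis inner_add_left inner_commute sum_mset.remove)
    moreover have "u \<bullet> u = 1"
      using uU by (simp add: unit_vectors_def norm_eq_1)
    ultimately show ?thesis
      using uU by (metis le_add_same_cancel1)
  qed
qed

lemma unit_vector_inner_ge_1:
  assumes "z \<in> Z" "z \<noteq> 0"
  shows "\<exists>u\<in>unit_vectors Z. 1 \<le> z \<bullet> u"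
proof -
  obtain us where "set us \<subseteq> unit_vectors Z" "z = sum_list us"
    using unit_generated assms(1) unfolding unit_generated_def unit_vectors_def by blast
  with assms(2) show ?thesis
    using sum_mset_unit_vectors_inner_ge_1[of "mset us"] by (simp add: sum_mset_sum_list)
qed

text \<open>Induction on \<open>(norm z)\<^sup>2\<close>: subtracting a unit vector \<open>u\<close> with \<open>1 \<le> z \<bullet> u\<close> lowers it by
  at least \<open>1\<close>.\<close>
lemma mem_dirichlet_iff_unit_vectors:
  "w \<in> dirichlet Z \<longleftrightarrow> (\<forall>u\<in>unit_vectors Z. 2 * (w \<bullet> u) \<le> 1)"
proof
  assume w: "\<forall>u\<in>unit_vectors Z. 2 * (w \<bullet> u) \<le> 1"
  have "2 * (w \<bullet> z) \<le> (norm z)\<^sup>2" if "z \<in> Z" "(norm z)\<^sup>2 \<le> real n" for z n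
    using that
  proof (induction n arbitrary: z)
    case (Suc n)
    show ?case
    proof (cases "z = 0")
      case False
      then obtain u where u: "u \<in> unit_vectors Z" "1 \<le> z \<bullet> u"
        using unit_vector_inner_ge_1 Suc.prems(1) by blast
      have n: "(norm (z - u))\<^sup>2 = (norm z)\<^sup>2 - 2 * (z \<bullet> u) + 1"
        using u(1) by (simp add: unit_vectors_def norm_eq_1 power2_norm_eq_inner
            inner_diff_left inner_diff_right inner_commute)
      have "2 * (w \<bullet> (z - u)) \<le> (norm (z - u))\<^sup>2"
        using Suc u diff_in[of z u] n by (intro Suc.IH) (auto simp: unit_vectors_def)
      moreover have "2 * (w \<bullet> u) \<le> 1"
        using w u(1) by blast
      ultimately show ?thesis
        using u(2) n by (simp add: inner_diff_right)
    qed simp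
  qed simp
  then show "w \<in> dirichlet Z"
    unfolding mem_dirichlet_iff by (meson real_arch_simple)
qed (use dirichlet_inner_unit_vector_le in blast)

end

lemma cylinder_subset: "cylinder \<iota> K s \<subseteq> K"
  by (cases s) auto

subsection \<open>The continued fraction map\<close>

locale cf_setting = inversion \<iota> + boundary_choice Z K + integral_unit_lattice Z
  for \<iota> :: "'a::euclidean_space \<Rightarrow> 'a" and Z K :: "'a set" +
  assumes nicely_invertible: "nicely_invertible \<iota> Z"
    and norm_euclidean: "norm_euclidean (dirichlet Z)"
    and three_remote: "three_remote Z (dirichlet Z)"
begin

abbreviation "T \<equiv> cf_map \<iota> Z K"

lemma norm_less_1: "x \<in> dirichlet Z \<Longrightarrow> norm x < 1"
proof -
  assume "x \<in> dirichlet Z"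
  moreover have "bdd_above (norm ` dirichlet Z)"
    using bounded_dirichlet by (auto simp: bounded_iff bdd_above_def)
  ultimately have "norm x \<le> (SUP y\<in>dirichlet Z. norm y)"
    by (rule cSUP_upper)
  with norm_euclidean show ?thesis
    unfolding norm_euclidean_def by linarith
qed

lemma inversion_unit_vector: "u \<in> unit_vectors Z \<Longrightarrow> \<iota> u \<in> unit_vectors Z"
  using nicely_invertible by (auto simp: unit_vectors_def nicely_invertible_def norm_inversion)

lemma scaleR_inversion_sqrt2_vector: "c \<in> sqrt2_vectors Z \<Longrightarrow> 2 *\<^sub>R \<iota> c \<in> Z"
  using nicely_invertible by (force simp: sqrt2_vectors_def nicely_invertible_def)

lemma inversion_mem_dirichlet_iff:
  assumes "y \<noteq> 0"
  shows "\<iota> y \<in> dirichlet Z \<longleftrightarrow> (\<forall>v\<in>unit_vectors Z. 1 \<le> dist y v)"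
proof -
  have "1 \<le> dist y v \<longleftrightarrow> 2 * (\<iota> y \<bullet> \<iota> v) \<le> 1" if "v \<in> unit_vectors Z" for v
    using one_le_dist_inversion_iff_norm_1[of "\<iota> y" v] assms that by (simp add: unit_vectors_def)
  moreover have "unit_vectors Z = \<iota> ` unit_vectors Z"
    using inversion_unit_vector by (force simp: image_iff)
  ultimately show ?thesis
    unfolding mem_dirichlet_iff_unit_vectors by (metis (no_types, lifting) image_iff)
qed

text \<open>Norm \<open>\<surd>3\<close> is excluded by 3-remoteness, norms \<open>\<ge> 2\<close> because the Dirichlet region lies in
  the open unit ball.\<close>
lemma one_le_dist_remote:
  assumes c: "c \<in> Z" "c \<noteq> 0" "c \<notin> unit_vectors Z" "c \<notin> sqrt2_vectors Z"
    and x: "x \<in> dirichlet Z"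
  shows "1 \<le> dist x c"
proof -
  obtain k :: int where k: "(norm c)\<^sup>2 = of_int k"
    using norm_power2_Ints[OF c(1)] Ints_cases by metis
  have "k \<noteq> 1"
    using c(1,3) k by (auto simp: unit_vectors_def power2_norm_eq_inner norm_eq_1)
  moreover have "k \<noteq> 2"
    using c(1,4) k by (auto simp: sqrt2_vectors_def)
  moreover have "0 < (norm c)\<^sup>2"
    using c(2) by simp
  then have "k > 0"
    using k by simp
  ultimately consider "k = 3" | "k \<ge> 4"
    by linarith
  then show ?thesis
  proof cases
    case 1
    then have "norm c = sqrt 3"
      using k by (metis norm_ge_zero of_int_numeral real_sqrt_unique)
    then have "1 \<le> (INF x\<in>dirichlet Z. dist c x)"
      using three_remote c(1) unfolding three_remote_def by blast
    also have "\<dots> \<le> dist c x"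
      by (rule cINF_lower[OF _ x]) (auto intro: bdd_belowI[of _ 0])
    finally show ?thesis
      by (simp add: dist_commute)
  next
    case 2
    then have "2\<^sup>2 \<le> (norm c)\<^sup>2"
      using k by simp
    then have "2 \<le> norm c"
      using abs_le_square_iff[of 2 "norm c"] by simp
    moreover have "norm c - norm x \<le> dist x c"
      using norm_triangle_ineq2[of c x] by (simp add: dist_norm norm_minus_commute)
    ultimately show ?thesis
      using norm_less_1[OF x] by linarith
  qed
qed

lemma K_Int_cut_region_eq_empty: "0 \<in> S \<Longrightarrow> K \<inter> cut_region S V = {}"
  using norm_less_1 K_subset_dirichlet unfolding cut_region_def by fastforce

lemma K_Int_cut_region_restrict:
  assumes "S \<subseteq> Z" "0 \<notin> S"
  shows "K \<inter> cut_region S V = K \<inter> cut_region (S \<inter> (unit_vectors Z \<union> sqrt2_vectors Z)) V"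
proof -
  have "1 \<le> dist y c" if "y \<in> K" "c \<in> S" "c \<notin> unit_vectors Z \<union> sqrt2_vectors Z" for y c
    using one_le_dist_remote[of c y] assms that K_subset_dirichlet by blast
  then show ?thesis
    unfolding cut_region_def by blast
qed

lemma cf_map_inversion_add:
  assumes "y \<in> K" "a \<in> Z" "a \<noteq> 0"
  shows "T (\<iota> (y + a)) = y"
  using add_lattice_point_nonzero[OF assms] lat_floor_add[OF assms(1,2)] by (simp add: cf_map_def)

lemma funpow_cf_map_inversion_add:
  assumes "y \<in> K" "a \<in> Z" "a \<noteq> 0"
  shows "(T ^^ Suc n) (\<iota> (y + a)) = (T ^^ n) y"
  using cf_map_inversion_add[OF assms] by (simp only: funpow_Suc_right comp_def)

lemma inversion_in_K_imp_zero:
  assumes "x \<in> K" "\<iota> x \<in> K"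
  shows "x = 0"
proof (rule ccontr)
  assume "x \<noteq> 0"
  then have "norm x * norm (\<iota> x) = 1"
    by (simp add: norm_inversion)
  moreover have "norm x * norm (\<iota> x) < 1 * 1"
    using assms norm_less_1 K_subset_dirichlet by (intro mult_strict_mono) auto
  ultimately show False
    by simp
qed

lemma negligible_cylinder_of_zero: "0 \<in> set s \<Longrightarrow> negligible (cylinder \<iota> K s)"
proof (induction s)
  case (Cons a s)
  show ?case
  proof (cases "a = 0")
    case True
    have "x = 0" if "x \<in> cylinder \<iota> K (a # s)" for x
      using that True cylinder_subset[of \<iota> K s] inversion_in_K_imp_zero[of x] by auto
    then have "cylinder \<iota> K (a # s) \<subseteq> {0}"
      by blast
    then show ?thesis
      using negligible_subset by blast
  next
    case False
    then have "negligible (\<iota> ` (+) a ` cylinder \<iota> K s)"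
      using Cons by (simp add: negligible_inversion_image negligible_translation)
    moreover have "cylinder \<iota> K (a # s) \<subseteq> \<iota> ` (+) a ` cylinder \<iota> K s"
      by (auto simp: add.commute)
    ultimately show ?thesis
      using negligible_subset by blast
  qed
qed simp

lemma cylinder_snoc:
  assumes "set s \<subseteq> Z - {0}" "b \<in> Z" "b \<noteq> 0"
  shows "cylinder \<iota> K (s @ [b]) =
    {x \<in> cylinder \<iota> K s. (T ^^ length s) x \<noteq> 0 \<and> \<iota> ((T ^^ length s) x) - b \<in> K}"
  using assms(1)
proof (induction s)
  case Nil
  have "x \<in> \<iota> ` (\<lambda>y. y + b) ` K \<longleftrightarrow> x \<noteq> 0 \<and> \<iota> x - b \<in> K" if "x \<in> K" for x
  proof
    assume "x \<in> \<iota> ` (\<lambda>y. y + b) ` K"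
    then obtain y where "y \<in> K" "x = \<iota> (y + b)"
      by blast
    then show "x \<noteq> 0 \<and> \<iota> x - b \<in> K"
      using add_lattice_point_nonzero assms(2,3) by auto
  next
    assume "x \<noteq> 0 \<and> \<iota> x - b \<in> K"
    then show "x \<in> \<iota> ` (\<lambda>y. y + b) ` K"
      by (auto simp: image_iff intro!: exI[of _ "\<iota> x"] bexI[of _ "\<iota> x - b"])
  qed
  then show ?case
    by auto
next
  case (Cons a s)
  then have a: "a \<in> Z" "a \<noteq> 0" and s: "set s \<subseteq> Z - {0}"
    by auto
  have shift: "(T ^^ length (a # s)) x = (T ^^ length s) y"
    if "x = \<iota> (y + a)" "y \<in> cylinder \<iota> K s" for x y
    using funpow_cf_map_inversion_add[OF _ a] cylinder_subset[of \<iota> K s] that by auto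
  show ?case
  proof (intro set_eqI iffI)
    fix x assume "x \<in> cylinder \<iota> K ((a # s) @ [b])"
    then obtain y where y: "x \<in> K" "y \<in> cylinder \<iota> K (s @ [b])" "x = \<iota> (y + a)"
      by auto
    then show "x \<in> {x \<in> cylinder \<iota> K (a # s). (T ^^ length (a # s)) x \<noteq> 0 \<and>
        \<iota> ((T ^^ length (a # s)) x) - b \<in> K}"
      using Cons.IH[OF s] shift[OF y(3)] by auto
  next
    fix x assume x: "x \<in> {x \<in> cylinder \<iota> K (a # s). (T ^^ length (a # s)) x \<noteq> 0 \<and>
        \<iota> ((T ^^ length (a # s)) x) - b \<in> K}"
    then obtain y where y: "x \<in> K" "y \<in> cylinder \<iota> K s" "x = \<iota> (y + a)"
      by auto
    then have "y \<in> cylinder \<iota> K (s @ [b])"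
      using Cons.IH[OF s] x shift[OF y(3,2)] by auto
    with y show "x \<in> cylinder \<iota> K ((a # s) @ [b])"
      by auto
  qed
qed

definition cylinder_image :: "'a list \<Rightarrow> 'a set" where
  "cylinder_image s = (T ^^ length s) ` cylinder \<iota> K s"

lemma cylinder_image_Nil: "cylinder_image [] = K"
  unfolding cylinder_image_def by simp

lemma cylinder_image_snoc:
  assumes "set s \<subseteq> Z - {0}" "b \<in> Z" "b \<noteq> 0"
  shows "cylinder_image (s @ [b]) = {y \<in> K. \<iota> (y + b) \<in> cylinder_image s}"
proof -
  have "cylinder_image (s @ [b]) = T ` (T ^^ length s) ` cylinder \<iota> K (s @ [b])"
    unfolding cylinder_image_def by (simp add: image_comp)
  also have "(T ^^ length s) ` cylinder \<iota> K (s @ [b]) =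
      {p \<in> cylinder_image s. p \<noteq> 0 \<and> \<iota> p - b \<in> K}"
    unfolding cylinder_snoc[OF assms] cylinder_image_def by auto
  also have "T ` {p \<in> cylinder_image s. p \<noteq> 0 \<and> \<iota> p - b \<in> K} =
      {y \<in> K. \<iota> (y + b) \<in> cylinder_image s}"
  proof (intro set_eqI iffI)
    fix y assume "y \<in> T ` {p \<in> cylinder_image s. p \<noteq> 0 \<and> \<iota> p - b \<in> K}"
    then obtain p where p: "p \<in> cylinder_image s" "\<iota> p - b \<in> K" "y = T p"
      by blast
    then have "y = \<iota> p - b"
      using cf_map_inversion_add[OF p(2) assms(2,3)] by simp
    with p(1,2) show "y \<in> {y \<in> K. \<iota> (y + b) \<in> cylinder_image s}"
      by simp
  next
    fix y assume y: "y \<in> {y \<in> K. \<iota> (y + b) \<in> cylinder_image s}"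
    then have "\<iota> (y + b) \<noteq> 0" "y = T (\<iota> (y + b))"
      using add_lattice_point_nonzero cf_map_inversion_add assms(2,3) by auto
    with y show "y \<in> T ` {p \<in> cylinder_image s. p \<noteq> 0 \<and> \<iota> p - b \<in> K}"
      by (auto intro!: image_eqI[of _ _ "\<iota> (y + b)"])
  qed
  finally show ?thesis .
qed

lemma cylinder_eq_inverse_branch:
  "set s \<subseteq> Z - {0} \<Longrightarrow> x \<in> cylinder \<iota> K s \<Longrightarrow> x = inverse_branch \<iota> s ((T ^^ length s) x)"
proof (induction s arbitrary: x)
  case (Cons a s)
  then obtain y where y: "y \<in> cylinder \<iota> K s" "x = \<iota> (y + a)"
    by auto
  then have "(T ^^ length (a # s)) x = (T ^^ length s) y"
    using funpow_cf_map_inversion_add[of y a] Cons.prems(1) cylinder_subset[of \<iota> K s] by auto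
  with Cons y show ?case
    by simp
qed simp

lemma negligible_cylinder:
  assumes "set s \<subseteq> Z - {0}" "negligible (cylinder_image s)"
  shows "negligible (cylinder \<iota> K s)"
proof (rule negligible_subset)
  show "negligible (inverse_branch \<iota> s ` cylinder_image s)"
    using assms(2) by (rule negligible_inverse_branch_image)
  show "cylinder \<iota> K s \<subseteq> inverse_branch \<iota> s ` cylinder_image s"
    using cylinder_eq_inverse_branch[OF assms(1)] unfolding cylinder_image_def by blast
qed

subsection \<open>Images of cylinders\<close>

text \<open>Pulling back \<open>dirichlet Z \<inter> cut_region S V\<close> along \<open>y \<mapsto> \<iota> (y + b)\<close>: the condition of lying
  in the Dirichlet region gives the unit spheres around \<open>v - b\<close>, a sphere around a point \<open>c\<close> of
  norm \<open>\<surd>2\<close> gives the sphere around \<open>2 \<iota> c - b\<close>, and spheres around unit vectors as well as the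
  half-spaces become the half-spaces below.\<close>
definition pulled_centres :: "'a \<Rightarrow> 'a set \<Rightarrow> 'a set" where
  "pulled_centres b S = (\<lambda>v. v - b) ` unit_vectors Z \<union> (\<lambda>c. 2 *\<^sub>R \<iota> c - b) ` (S \<inter> sqrt2_vectors Z)"

definition pulled_halfspaces :: "'a \<Rightarrow> 'a set \<Rightarrow> 'a set \<Rightarrow> ('a \<times> real) set" where
  "pulled_halfspaces b S V =
     (\<lambda>c. (\<iota> c, 2 * (b \<bullet> \<iota> c))) ` (S \<inter> unit_vectors Z) \<union> (\<lambda>v. (\<iota> v, 2 * (b \<bullet> \<iota> v) + 1)) ` V"

lemma pulled_centres_subset: "b \<in> Z \<Longrightarrow> pulled_centres b S \<subseteq> Z"
  unfolding pulled_centres_def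
  using diff_in scaleR_inversion_sqrt2_vector by (auto simp: unit_vectors_def)

lemma pulled_halfspaces_unit_Ints:
  assumes "b \<in> Z" "V \<subseteq> unit_vectors Z" "(w, k) \<in> pulled_halfspaces b S V"
  shows "w \<in> unit_vectors Z \<and> k \<in> \<int>"
proof -
  have "\<iota> v \<in> unit_vectors Z \<and> 2 * (b \<bullet> \<iota> v) \<in> \<int>" if "v \<in> unit_vectors Z" for v
    using inversion_unit_vector[OF that] two_inner_Ints assms(1) by (auto simp: unit_vectors_def)
  then show ?thesis
    using assms(2,3) unfolding pulled_halfspaces_def by auto
qed

lemma pullback_dirichlet_Int_cut_region:
  assumes y: "y \<in> K" and b: "b \<in> Z" "b \<noteq> 0"
    and S: "S \<subseteq> unit_vectors Z \<union> sqrt2_vectors Z" and V: "V \<subseteq> unit_vectors Z"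
  shows "\<iota> (y + b) \<in> dirichlet Z \<inter> cut_region S V \<longleftrightarrow>
    y \<in> cut_region (pulled_centres b S) {} \<inter> halfspaces (pulled_halfspaces b S V)"
proof -
  have yb: "y + b \<noteq> 0"
    using add_lattice_point_nonzero y b by blast
  have dirichlet: "\<iota> (y + b) \<in> dirichlet Z \<longleftrightarrow> (\<forall>v\<in>unit_vectors Z. 1 \<le> dist y (v - b))"
    using inversion_mem_dirichlet_iff[OF yb] by (simp add: dist_norm algebra_simps)
  have unit: "1 \<le> dist (\<iota> (y + b)) c \<longleftrightarrow> 2 * (y \<bullet> \<iota> c) \<le> 1 - 2 * (b \<bullet> \<iota> c)"
    if "c \<in> unit_vectors Z" for c
    using one_le_dist_inversion_iff_norm_1[OF yb] that
    by (simp add: unit_vectors_def inner_add_left algebra_simps)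
  have sqrt2: "1 \<le> dist (\<iota> (y + b)) c \<longleftrightarrow> 1 \<le> dist y (2 *\<^sub>R \<iota> c - b)"
    if "c \<in> sqrt2_vectors Z" for c
    using one_le_dist_inversion_iff_norm_sqrt2[OF yb] that
    by (simp add: sqrt2_vectors_def dist_norm algebra_simps)
  have half: "\<iota> (y + b) \<bullet> v \<le> 0 \<longleftrightarrow> 2 * (y \<bullet> \<iota> v) \<le> 1 - (2 * (b \<bullet> \<iota> v) + 1)"
    if "v \<in> unit_vectors Z" for v
  proof -
    have "v \<noteq> 0"
      using that by (auto simp: unit_vectors_def)
    then show ?thesis
      using inversion_inner_nonpos_iff[OF yb] by (auto simp: inner_add_left)
  qed
  have "\<iota> (y + b) \<in> cut_region S V \<longleftrightarrow>
      (\<forall>c\<in>S \<inter> sqrt2_vectors Z. 1 \<le> dist y (2 *\<^sub>R \<iota> c - b)) \<and>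
      (\<forall>c\<in>S \<inter> unit_vectors Z. 2 * (y \<bullet> \<iota> c) \<le> 1 - 2 * (b \<bullet> \<iota> c)) \<and>
      (\<forall>v\<in>V. 2 * (y \<bullet> \<iota> v) \<le> 1 - (2 * (b \<bullet> \<iota> v) + 1))"
    using S V unit sqrt2 half unfolding cut_region_def by blast
  moreover have "y \<in> cut_region (pulled_centres b S) {} \<longleftrightarrow>
      (\<forall>v\<in>unit_vectors Z. 1 \<le> dist y (v - b)) \<and>
      (\<forall>c\<in>S \<inter> sqrt2_vectors Z. 1 \<le> dist y (2 *\<^sub>R \<iota> c - b))"
    unfolding cut_region_def pulled_centres_def by blast
  moreover have "y \<in> halfspaces (pulled_halfspaces b S V) \<longleftrightarrow>
      (\<forall>c\<in>S \<inter> unit_vectors Z. 2 * (y \<bullet> \<iota> c) \<le> 1 - 2 * (b \<bullet> \<iota> c)) \<and>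
      (\<forall>v\<in>V. 2 * (y \<bullet> \<iota> v) \<le> 1 - (2 * (b \<bullet> \<iota> v) + 1))"
    unfolding halfspaces_def pulled_halfspaces_def by blast
  ultimately show ?thesis
    using dirichlet by blast
qed

definition ae_cut_region :: "'a set \<Rightarrow> bool" where
  "ae_cut_region P \<longleftrightarrow> negligible P \<or>
     (\<exists>S V. S \<subseteq> unit_vectors Z \<union> sqrt2_vectors Z \<and> V \<subseteq> unit_vectors Z \<and>
        ae_eq P (K \<inter> cut_region S V))"

lemma ae_cut_region_K_Int_cut_region:
  assumes "S \<subseteq> Z" "V \<subseteq> unit_vectors Z" "ae_eq P (K \<inter> cut_region S V)"
  shows "ae_cut_region P"
proof (cases "0 \<in> S")
  case True
  then have "negligible P"
    using ae_eq_negligible[OF assms(3)] K_Int_cut_region_eq_empty by simp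
  then show ?thesis
    unfolding ae_cut_region_def by blast
next
  case False
  let ?S = "S \<inter> (unit_vectors Z \<union> sqrt2_vectors Z)"
  have "ae_eq P (K \<inter> cut_region ?S V)"
    using assms(3) K_Int_cut_region_restrict[OF assms(1) False] by simp
  moreover have "?S \<subseteq> unit_vectors Z \<union> sqrt2_vectors Z"
    by blast
  ultimately show ?thesis
    using assms(2) unfolding ae_cut_region_def by blast
qed

lemma ae_cut_region_ae_eq:
  assumes "ae_eq P Q" "ae_cut_region Q"
  shows "ae_cut_region P"
proof -
  from assms(2) consider "negligible Q"
    | S V where "S \<subseteq> unit_vectors Z \<union> sqrt2_vectors Z" "V \<subseteq> unit_vectors Z"
        "ae_eq Q (K \<inter> cut_region S V)"
    unfolding ae_cut_region_def by blast
  then show ?thesis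
  proof cases
    case 1
    then show ?thesis
      using ae_eq_negligible[OF assms(1)] unfolding ae_cut_region_def by blast
  next
    case 2
    then show ?thesis
      using ae_eq_trans[OF assms(1)] unfolding ae_cut_region_def by blast
  qed
qed

lemma ae_cut_region_pullback_dirichlet_Int_cut_region:
  assumes b: "b \<in> Z" "b \<noteq> 0"
    and S: "S \<subseteq> unit_vectors Z \<union> sqrt2_vectors Z" and V: "V \<subseteq> unit_vectors Z"
  shows "ae_cut_region {y \<in> K. \<iota> (y + b) \<in> dirichlet Z \<inter> cut_region S V}"
proof -
  define C where "C = pulled_centres b S"
  define H where "H = pulled_halfspaces b S V"
  have H: "w \<in> unit_vectors Z \<and> k \<in> \<int>" if "(w, k) \<in> H" for w k
    using pulled_halfspaces_unit_Ints[OF b(1) V] that unfolding H_def by blast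
  have eq: "{y \<in> K. \<iota> (y + b) \<in> dirichlet Z \<inter> cut_region S V} =
      K \<inter> (cut_region C {} \<inter> (dirichlet Z \<inter> halfspaces H))"
    using pullback_dirichlet_Int_cut_region[OF _ b S V] K_subset_dirichlet
    unfolding C_def H_def by blast
  show ?thesis
  proof (cases "\<forall>(w, k)\<in>H. k \<le> 1")
    case True
    then have "dirichlet Z \<inter> halfspaces H = dirichlet Z \<inter> cut_region {} {w. (w, 1) \<in> H}"
      using H by (intro dirichlet_Int_halfspaces_eq) auto
    then have "K \<inter> (cut_region C {} \<inter> (dirichlet Z \<inter> halfspaces H)) =
        K \<inter> (cut_region C {} \<inter> cut_region {} {w. (w, 1) \<in> H})"
      using K_subset_dirichlet by blast
    also have "\<dots> = K \<inter> cut_region C {w. (w, 1) \<in> H}"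
      by (simp add: cut_region_Int)
    finally have ae: "ae_eq {y \<in> K. \<iota> (y + b) \<in> dirichlet Z \<inter> cut_region S V}
        (K \<inter> cut_region C {w. (w, 1) \<in> H})"
      unfolding eq by (simp add: ae_eq_refl)
    have "C \<subseteq> Z" "{w. (w, 1) \<in> H} \<subseteq> unit_vectors Z"
      using pulled_centres_subset[OF b(1)] H unfolding C_def by auto
    then show ?thesis
      using ae by (rule ae_cut_region_K_Int_cut_region)
  next
    case False
    then obtain w k where wk: "(w, k) \<in> H" "\<not> k \<le> 1"
      by blast
    then have "2 \<le> k"
      using H[OF wk(1)] Ints_less_imp_add_one_le[of 1 k] by simp
    then have "negligible (dirichlet Z \<inter> halfspaces H)"
      using negligible_dirichlet_Int_halfspaces wk(1) H by blast
    then have "negligible (K \<inter> (cut_region C {} \<inter> (dirichlet Z \<inter> halfspaces H)))"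
      by (rule negligible_subset) blast
    then show ?thesis
      unfolding eq ae_cut_region_def by blast
  qed
qed

lemma ae_cut_region_pullback:
  assumes b: "b \<in> Z" "b \<noteq> 0" and P: "ae_cut_region P"
  shows "ae_cut_region {y \<in> K. \<iota> (y + b) \<in> P}"
proof (cases "negligible P")
  case True
  have "negligible {y \<in> K. \<iota> (y + b) \<in> P}"
    by (rule negligible_subset[OF negligible_inversion_preimage[OF True, of b]]) blast
  then show ?thesis
    unfolding ae_cut_region_def by blast
next
  case False
  with P obtain S V where S: "S \<subseteq> unit_vectors Z \<union> sqrt2_vectors Z" and V: "V \<subseteq> unit_vectors Z"
    and ae: "ae_eq P (K \<inter> cut_region S V)"
    unfolding ae_cut_region_def by blast
  have "ae_eq P (dirichlet Z \<inter> cut_region S V)"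
    using ae ae_eq_K_Int_dirichlet_Int by (rule ae_eq_trans)
  then have "ae_eq {y \<in> K. \<iota> (y + b) \<in> P} {y \<in> K. \<iota> (y + b) \<in> dirichlet Z \<inter> cut_region S V}"
    by (rule ae_eq_inversion_preimage)
  then show ?thesis
    using ae_cut_region_pullback_dirichlet_Int_cut_region[OF b S V] by (rule ae_cut_region_ae_eq)
qed

lemma ae_cut_region_cylinder_image: "set s \<subseteq> Z - {0} \<Longrightarrow> ae_cut_region (cylinder_image s)"
proof (induction s rule: rev_induct)
  case Nil
  have "ae_eq K (K \<inter> cut_region {} {})"
    by (simp add: cut_region_def ae_eq_refl)
  then show ?case
    unfolding cylinder_image_Nil ae_cut_region_def by (intro disjI2 exI[of _ "{}"] conjI) simp_all
next
  case (snoc b s)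
  then show ?case
    using ae_cut_region_pullback cylinder_image_snoc by simp
qed

lemma cylinder_image_ae_eq_cut_region:
  assumes s: "set s \<subseteq> Z" and pos: "emeasure lebesgue (cylinder \<iota> K s) > 0"
  obtains S V where "S \<subseteq> unit_vectors Z \<union> sqrt2_vectors Z" "V \<subseteq> unit_vectors Z"
    "emeasure lebesgue (K \<inter> cut_region S V) > 0" "ae_eq (cylinder_image s) (K \<inter> cut_region S V)"
proof -
  have not_null: "\<not> negligible (cylinder \<iota> K s)"
    using pos by (auto simp: negligible_iff_null_sets)
  then have s0: "set s \<subseteq> Z - {0}"
    using s negligible_cylinder_of_zero by blast
  then have "\<not> negligible (cylinder_image s)"
    using not_null negligible_cylinder by blast
  with ae_cut_region_cylinder_image[OF s0] obtain S V
    where SV: "S \<subseteq> unit_vectors Z \<union> sqrt2_vectors Z" "V \<subseteq> unit_vectors Z"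
      and ae: "ae_eq (cylinder_image s) (K \<inter> cut_region S V)"
    unfolding ae_cut_region_def by blast
  have "\<not> negligible (K \<inter> cut_region S V)"
    using ae ae_eq_negligible \<open>\<not> negligible (cylinder_image s)\<close> by blast
  then have "emeasure lebesgue (K \<inter> cut_region S V) > 0"
    using negligible_iff_emeasure0[OF K_Int_cut_region_lebesgue]
    by (simp add: zero_less_iff_neq_zero)
  with SV ae that show ?thesis
    by blast
qed

end

theorem lemma4p8:
  fixes \<iota> :: "'a::euclidean_space \<Rightarrow> 'a" and Z K :: "'a set"
  assumes "is_lattice Z"
    and "is_inversion \<iota>"
    and "is_boundary_choice Z K"
    and "integral_lattice Z"
    and "nicely_invertible \<iota> Z"
    and "norm_euclidean (dirichlet Z)"
    and "unit_generated Z"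
    and "three_remote Z (dirichlet Z)"
  shows "\<exists>\<U>. finite \<U> \<and>
           (\<forall>U\<in>\<U>. U \<subseteq> K \<and> U \<in> sets lebesgue \<and> emeasure lebesgue U > 0) \<and>
           (\<forall>s. set s \<subseteq> Z \<longrightarrow> emeasure lebesgue (cylinder \<iota> K s) > 0 \<longrightarrow>
              (\<exists>U\<in>\<U>. ae_eq ((cf_map \<iota> Z K ^^ length s) ` cylinder \<iota> K s) U))"
proof -
  interpret cf_setting \<iota> Z K
    using assms by unfold_locales
  let ?region = "\<lambda>(S, V). K \<inter> cut_region S V"
  define \<U> where "\<U> = ?region ` {(S, V). S \<subseteq> unit_vectors Z \<union> sqrt2_vectors Z \<and>
    V \<subseteq> unit_vectors Z \<and> emeasure lebesgue (K \<inter> cut_region S V) > 0}"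
  show ?thesis
  proof (intro exI[of _ \<U>] conjI allI impI)
    have "\<U> \<subseteq> ?region ` (Pow (unit_vectors Z \<union> sqrt2_vectors Z) \<times> Pow (unit_vectors Z))"
      unfolding \<U>_def by (intro image_mono) blast
    then show "finite \<U>"
      by (rule finite_subset) (simp add: finite_unit_vectors finite_sqrt2_vectors)
    show "\<forall>U\<in>\<U>. U \<subseteq> K \<and> U \<in> sets lebesgue \<and> emeasure lebesgue U > 0"
      unfolding \<U>_def using K_Int_cut_region_lebesgue by auto
  next
    fix s assume s: "set s \<subseteq> Z" and pos: "emeasure lebesgue (cylinder \<iota> K s) > 0"
    obtain S V where SV: "S \<subseteq> unit_vectors Z \<union> sqrt2_vectors Z" "V \<subseteq> unit_vectors Z"
      "emeasure lebesgue (K \<inter> cut_region S V) > 0"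
      and ae: "ae_eq (cylinder_image s) (K \<inter> cut_region S V)"
      by (rule cylinder_image_ae_eq_cut_region[OF s pos])
    have "K \<inter> cut_region S V \<in> \<U>"
      unfolding \<U>_def using SV by (intro image_eqI[of _ _ "(S, V)"]) auto
    with ae show "\<exists>U\<in>\<U>. ae_eq ((T ^^ length s) ` cylinder \<iota> K s) U"
      unfolding cylinder_image_def by blast
  qed
qed

end
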